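(* Let $0\le t_1<t_2$, let $m,k>0$ be constants, let $f\in C[t_1,t_2]$, and let $u_1,v_1\in\mathbb{R}$. For $u\in C^2[t_1,t_2]$ define $$I^t[u]=\frac{m}{2}\,[u',u']_{t_1}^{t_2}+\frac{k}{2}\,[u,u]_{t_1}^{t_2}-[f,u]_{t_1}^{t_2}-m v_1\,u(t_2),$$ and let $\mathcal{D}^t=\{\phi\in C^2[t_1,t_2]:\ \phi(t_1)=u_1\}$. Suppose $u\in\mathcal{D}^t$ is a stationary point of $I^t$ on $\mathcal{D}^t$, i.e. $\frac{d}{d\varepsilon}I^t[u+\varepsilon\eta]\big|_{\varepsilon=0}=0$ for every $\eta\in C^2[t_1,t_2]$ with $\eta(t_1)=0$. Then $u$ solves the initial value problem $$m u''(s)+k u(s)=f(s),\quad s\in(t_1,t_2),\qquad u(t_1)=u_1,\quad u'(t_1)=v_1 .$$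
   Context: For an interval $[t_1,t_2]$ with $t_1\ge0$ and functions $g,h\in L^2(t_1,t_2)$, the convolution over $[t_1,t_2]$ is defined as $$[g,h]_{t_1}^{t_2}=\int_0^{t_2-t_1}g(t_1+s)\,h(t_2-s)\,ds=\int_{t_1}^{t_2}g(s)\,h(t_1+t_2-s)\,ds .$$ (In the paper the last term of $I^t$ is written as $[\tilde f^1,u]_{t_1}^{t_2}$ with $\tilde f^1(s)=m v_1\delta(s-t_1)$, which by convention evaluates to $m v_1 u(t_2)$.) *)

theory Defs
  imports "HOL-Analysis.Analysis"
begin

definition dI :: "real \<Rightarrow> real \<Rightarrow> (real \<Rightarrow> real) \<Rightarrow> real \<Rightarrow> real" where
  "dI t1 t2 u x = vector_derivative u (at x within {t1..t2})"

definition C2 :: "real \<Rightarrow> real \<Rightarrow> (real \<Rightarrow> real) \<Rightarrow> bool" where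
  "C2 t1 t2 u \<longleftrightarrow>
     (\<forall>x\<in>{t1..t2}. (u has_vector_derivative dI t1 t2 u x) (at x within {t1..t2})) \<and>
     (\<forall>x\<in>{t1..t2}. (dI t1 t2 u has_vector_derivative dI t1 t2 (dI t1 t2 u) x) (at x within {t1..t2})) \<and>
     continuous_on {t1..t2} (dI t1 t2 (dI t1 t2 u))"

definition conv :: "real \<Rightarrow> real \<Rightarrow> (real \<Rightarrow> real) \<Rightarrow> (real \<Rightarrow> real) \<Rightarrow> real" where
  "conv t1 t2 g h = integral {t1..t2} (\<lambda>s. g s * h (t1 + t2 - s))"

definition It :: "real \<Rightarrow> real \<Rightarrow> real \<Rightarrow> real \<Rightarrow> (real \<Rightarrow> real) \<Rightarrow> real \<Rightarrow> (real \<Rightarrow> real) \<Rightarrow> real" where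
  "It t1 t2 m k f v1 u =
     m / 2 * conv t1 t2 (dI t1 t2 u) (dI t1 t2 u) + k / 2 * conv t1 t2 u u
     - conv t1 t2 f u - m * v1 * u t2"

end

theory Submission
  imports Defs
begin

text \<open>
  Expanding \<open>I\<^sup>t[u + \<epsilon>\<eta>]\<close> as a quadratic polynomial in \<open>\<epsilon>\<close> and using that the convolution
  is symmetric, the first variation is \<open>m[\<eta>',u'] + k[\<eta>,u] - [\<eta>,f] - m v\<^sub>1 \<eta>(t\<^sub>2)\<close>.
  Integrating \<open>[\<eta>',u']\<close> by parts turns it into
  \<open>m (u'(t\<^sub>1) - v\<^sub>1) \<eta>(t\<^sub>2) + [\<eta>, m u'' + k u - f]\<close>, using \<open>\<eta>(t\<^sub>1) = 0\<close>.
  Test functions that also vanish at \<open>t\<^sub>2\<close> give the differential equation by the fundamental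
  lemma of the calculus of variations, and the test function \<open>s - t\<^sub>1\<close> then isolates the
  boundary term, which yields \<open>u'(t\<^sub>1) = v\<^sub>1\<close>.
\<close>

lemma dI_eqI:
  assumes "a < b" "x \<in> {a..b}" "(f has_vector_derivative f') (at x within {a..b})"
  shows "dI a b f x = f'"
  unfolding dI_def using vector_derivative_within_closed_interval[OF assms] .

lemma C2_continuous:
  assumes "C2 a b u"
  shows "continuous_on {a..b} u" "continuous_on {a..b} (dI a b u)"
    "continuous_on {a..b} (dI a b (dI a b u))"
  using assms unfolding C2_def by (auto intro: continuous_on_vector_derivative)

lemma C2I:
  fixes g g' g'' :: "real \<Rightarrow> real"
  assumes "a < b"
    and g: "\<And>x. x \<in> {a..b} \<Longrightarrow> (g has_vector_derivative g' x) (at x within {a..b})"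
    and g': "\<And>x. x \<in> {a..b} \<Longrightarrow> (g' has_vector_derivative g'' x) (at x within {a..b})"
    and "continuous_on {a..b} g''"
  shows "C2 a b g"
proof -
  have dI_g: "dI a b g x = g' x" if "x \<in> {a..b}" for x
    using dI_eqI[OF \<open>a < b\<close> that g[OF that]] .
  have dI_g': "(dI a b g has_vector_derivative g'' x) (at x within {a..b})" if "x \<in> {a..b}" for x
    by (rule has_vector_derivative_transform[OF that _ g'[OF that]]) (simp add: dI_g)
  have "continuous_on {a..b} (dI a b (dI a b g))"
    using \<open>continuous_on {a..b} g''\<close>
    by (rule continuous_on_eq) (simp add: dI_eqI[OF \<open>a < b\<close> _ dI_g'])
  then show ?thesis
    unfolding C2_def using g dI_g dI_g' dI_eqI[OF \<open>a < b\<close> _ dI_g'] by auto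
qed

lemma dI_add_scaled:
  assumes "a < b" "C2 a b u" "C2 a b \<eta>" "x \<in> {a..b}"
  shows "dI a b (\<lambda>s. u s + \<epsilon> * \<eta> s) x = dI a b u x + \<epsilon> * dI a b \<eta> x"
  using assms unfolding C2_def by (intro dI_eqI derivative_intros) auto

lemma continuous_on_reflect:
  fixes h :: "real \<Rightarrow> real"
  assumes "continuous_on {a..b} h"
  shows "continuous_on {a..b} (\<lambda>s. h (a + b - s))"
  by (rule continuous_on_compose2[OF assms]) (auto intro: continuous_intros)

lemma has_vector_derivative_reflect:
  fixes F :: "real \<Rightarrow> real"
  assumes "x \<in> {a..b}" "(F has_vector_derivative F') (at (a + b - x) within {a..b})"
  shows "((\<lambda>s. F (a + b - s)) has_vector_derivative - F') (at x within {a..b})"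
proof -
  have "((\<lambda>s. a + b - s) has_vector_derivative -1) (at x within {a..b})"
    by (auto intro!: derivative_eq_intros)
  moreover have "(F has_vector_derivative F') (at (a + b - x) within (\<lambda>s. a + b - s) ` {a..b})"
    using assms(2) by (rule has_vector_derivative_within_subset) auto
  ultimately show ?thesis
    using vector_diff_chain_within by (force simp: o_def)
qed

lemma integral_reflect_interval:
  fixes h :: "real \<Rightarrow> real"
  assumes "continuous_on {a..b} h" "a \<le> b"
  shows "integral {a..b} (\<lambda>s. h (a + b - s)) = integral {a..b} h"
proof -
  define H where "H x = integral {a..x} h" for x
  have "((\<lambda>s. - H (a + b - s)) has_vector_derivative h (a + b - x)) (at x within {a..b})"
    if "x \<in> {a..b}" for x
  proof -
    have "(H has_vector_derivative h (a + b - x)) (at (a + b - x) within {a..b})"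
      unfolding H_def using that by (intro integral_has_vector_derivative assms) auto
    from has_vector_derivative_minus[OF has_vector_derivative_reflect[OF that this]]
    show ?thesis by simp
  qed
  from fundamental_theorem_of_calculus[OF assms(2) this]
  show ?thesis by (simp add: H_def integral_unique)
qed

lemma conv_integrable:
  fixes g h :: "real \<Rightarrow> real"
  assumes "continuous_on {a..b} g" "continuous_on {a..b} h"
  shows "(\<lambda>s. g s * h (a + b - s)) integrable_on {a..b}"
  by (intro integrable_continuous_real continuous_on_mult assms continuous_on_reflect)

lemma conv_commute:
  assumes "continuous_on {a..b} g" "continuous_on {a..b} h" "a \<le> b"
  shows "conv a b g h = conv a b h g"
proof -
  have "conv a b g h = integral {a..b} (\<lambda>s. g (a + b - s) * h (a + b - (a + b - s)))"
    unfolding conv_def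
    by (rule integral_reflect_interval[symmetric, OF _ assms(3)])
      (intro continuous_on_mult assms continuous_on_reflect)
  then show ?thesis unfolding conv_def by (simp add: mult.commute)
qed

lemma conv_cong:
  assumes "\<And>x. x \<in> {a..b} \<Longrightarrow> g x = g' x" "\<And>x. x \<in> {a..b} \<Longrightarrow> h x = h' x"
  shows "conv a b g h = conv a b g' h'"
  unfolding conv_def by (rule integral_cong) (auto simp: assms)

lemma conv_add_left:
  assumes "continuous_on {a..b} g1" "continuous_on {a..b} g2" "continuous_on {a..b} h"
  shows "conv a b (\<lambda>x. g1 x + g2 x) h = conv a b g1 h + conv a b g2 h"
  unfolding conv_def distrib_right
  by (intro integral_add conv_integrable assms)

lemma conv_add_right:
  assumes "continuous_on {a..b} g" "continuous_on {a..b} h1" "continuous_on {a..b} h2"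
  shows "conv a b g (\<lambda>x. h1 x + h2 x) = conv a b g h1 + conv a b g h2"
  unfolding conv_def distrib_left
  by (intro integral_add conv_integrable assms)

lemma conv_diff_right:
  assumes "continuous_on {a..b} g" "continuous_on {a..b} h1" "continuous_on {a..b} h2"
  shows "conv a b g (\<lambda>x. h1 x - h2 x) = conv a b g h1 - conv a b g h2"
  unfolding conv_def right_diff_distrib
  by (intro integral_diff conv_integrable assms)

lemma conv_scale_left: "conv a b (\<lambda>x. c * g x) h = c * conv a b g h"
  unfolding conv_def by (simp add: mult.assoc)

lemma conv_scale_right: "conv a b g (\<lambda>x. c * h x) = c * conv a b g h"
  unfolding conv_def by (simp add: mult.left_commute)

lemma conv_by_parts:
  fixes g h :: "real \<Rightarrow> real"
  assumes "a \<le> b"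
    and g: "\<And>x. x \<in> {a..b} \<Longrightarrow> (g has_vector_derivative g' x) (at x within {a..b})"
    and h: "\<And>x. x \<in> {a..b} \<Longrightarrow> (h has_vector_derivative h' x) (at x within {a..b})"
    and "continuous_on {a..b} g'" "continuous_on {a..b} h'"
  shows "conv a b g' h = g b * h a - g a * h b + conv a b g h'"
proof -
  have "((\<lambda>s. g s * h (a + b - s)) has_vector_derivative
      g s * - h' (a + b - s) + g' s * h (a + b - s)) (at s within {a..b})"
    if s: "s \<in> {a..b}" for s
  proof -
    have "a + b - s \<in> {a..b}" using s by auto
    from has_vector_derivative_reflect[OF s h[OF this]]
    show ?thesis by (intro has_vector_derivative_mult g s)
  qed
  from fundamental_theorem_of_calculus[OF \<open>a \<le> b\<close> this]
  have "integral {a..b} (\<lambda>s. g' s * h (a + b - s) - g s * h' (a + b - s))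
      = g b * h a - g a * h b"
    by (simp add: integral_unique algebra_simps)
  moreover have "continuous_on {a..b} g" "continuous_on {a..b} h"
    using continuous_on_vector_derivative g h by blast+
  ultimately show ?thesis
    unfolding conv_def using assms by (simp add: integral_diff conv_integrable)
qed

lemma It_first_variation:
  assumes "a < b" "C2 a b u" "C2 a b \<eta>" "continuous_on {a..b} f"
  shows "((\<lambda>\<epsilon>. It a b m k f v1 (\<lambda>s. u s + \<epsilon> * \<eta> s)) has_real_derivative
      m * conv a b (dI a b \<eta>) (dI a b u) + k * conv a b \<eta> u - conv a b \<eta> f - m * v1 * \<eta> b)
    (at 0)"
proof -
  define Du De where "Du = dI a b u" and "De = dI a b \<eta>"
  have cont: "continuous_on {a..b} u" "continuous_on {a..b} Du"
    "continuous_on {a..b} \<eta>" "continuous_on {a..b} De"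
    using C2_continuous assms(2,3) by (auto simp: Du_def De_def)
  note conv_bilinear = conv_add_left conv_add_right conv_scale_left conv_scale_right
  have "It a b m k f v1 (\<lambda>s. u s + \<epsilon> * \<eta> s) = It a b m k f v1 u
      + \<epsilon> * (m * conv a b De Du + k * conv a b \<eta> u - conv a b \<eta> f - m * v1 * \<eta> b)
      + \<epsilon>\<^sup>2 * (m / 2 * conv a b De De + k / 2 * conv a b \<eta> \<eta>)" for \<epsilon>
  proof -
    have "conv a b (dI a b (\<lambda>s. u s + \<epsilon> * \<eta> s)) (dI a b (\<lambda>s. u s + \<epsilon> * \<eta> s))
        = conv a b (\<lambda>x. Du x + \<epsilon> * De x) (\<lambda>x. Du x + \<epsilon> * De x)"
      by (rule conv_cong) (auto simp: dI_add_scaled assms Du_def De_def)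
    moreover have "conv a b Du De = conv a b De Du" "conv a b u \<eta> = conv a b \<eta> u"
      "conv a b f \<eta> = conv a b \<eta> f"
      using cont assms(1,4) by (auto intro: conv_commute)
    ultimately show ?thesis
      unfolding It_def Du_def[symmetric]
      using cont assms(4)
      by (simp add: conv_bilinear continuous_intros algebra_simps power2_eq_square)
  qed
  moreover have "((\<lambda>\<epsilon>. A + \<epsilon> * B + \<epsilon>\<^sup>2 * C) has_real_derivative B) (at 0)" for A B C :: real
    by (auto intro!: derivative_eq_intros)
  ultimately show ?thesis by (simp add: Du_def De_def)
qed

lemma stationary_weak_euler_lagrange:
  assumes "a < b" "C2 a b u" "C2 a b \<eta>" "\<eta> a = 0" "continuous_on {a..b} f"
    and "((\<lambda>\<epsilon>. It a b m k f v1 (\<lambda>s. u s + \<epsilon> * \<eta> s)) has_real_derivative 0) (at 0)"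
  shows "m * (dI a b u a - v1) * \<eta> b
      + conv a b \<eta> (\<lambda>s. m * dI a b (dI a b u) s + k * u s - f s) = 0"
proof -
  define Du DDu De where "Du = dI a b u" and "DDu = dI a b Du" and "De = dI a b \<eta>"
  have cont: "continuous_on {a..b} u" "continuous_on {a..b} DDu"
    "continuous_on {a..b} \<eta>" "continuous_on {a..b} De"
    using C2_continuous assms(2,3) by (auto simp: DDu_def Du_def De_def)
  have d\<eta>: "\<And>x. x \<in> {a..b} \<Longrightarrow> (\<eta> has_vector_derivative De x) (at x within {a..b})"
    and dDu: "\<And>x. x \<in> {a..b} \<Longrightarrow> (Du has_vector_derivative DDu x) (at x within {a..b})"
    using assms(2,3) unfolding C2_def Du_def DDu_def De_def by auto
  have "m * conv a b De Du + k * conv a b \<eta> u - conv a b \<eta> f - m * v1 * \<eta> b = 0"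
    using DERIV_unique[OF It_first_variation[OF assms(1-3,5)] assms(6)]
    by (simp add: Du_def De_def)
  moreover have "conv a b De Du = \<eta> b * Du a - \<eta> a * Du b + conv a b \<eta> DDu"
    using \<open>a < b\<close> cont by (intro conv_by_parts d\<eta> dDu) auto
  moreover have "conv a b \<eta> (\<lambda>s. m * DDu s + k * u s - f s)
      = m * conv a b \<eta> DDu + k * conv a b \<eta> u - conv a b \<eta> f"
    using cont assms(5)
    by (simp add: conv_add_right conv_diff_right conv_scale_right continuous_intros)
  ultimately show ?thesis
    using \<open>\<eta> a = 0\<close> unfolding DDu_def[symmetric] Du_def[symmetric]
    by (simp add: algebra_simps)
qed

text \<open>
  The test function is a second antiderivative \<open>G\<close> of \<open>h\<close> corrected by a linear term so that
  it vanishes at both ends; then \<open>\<integral> G h = 0\<close> and \<open>\<integral> (G h + G'\<^sup>2) = [G G'] = 0\<close> force \<open>G' = 0\<close>.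
\<close>

lemma obtain_vanishing_second_antiderivative:
  fixes h :: "real \<Rightarrow> real"
  assumes "a < b" "continuous_on {a..b} h"
  obtains G G' where "G a = 0" "G b = 0"
    "\<And>x. x \<in> {a..b} \<Longrightarrow> (G has_vector_derivative G' x) (at x within {a..b})"
    "\<And>x. x \<in> {a..b} \<Longrightarrow> (G' has_vector_derivative h x) (at x within {a..b})"
proof -
  define H1 where "H1 x = integral {a..x} h" for x
  define H0 where "H0 x = integral {a..x} H1" for x
  define c where "c = - H0 b / (b - a)"
  have H1: "(H1 has_vector_derivative h x) (at x within {a..b})" if "x \<in> {a..b}" for x
    unfolding H1_def by (rule integral_has_vector_derivative[OF assms(2) that])
  then have "continuous_on {a..b} H1" by (rule continuous_on_vector_derivative)
  then have "(H0 has_vector_derivative H1 x) (at x within {a..b})" if "x \<in> {a..b}" for x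
    unfolding H0_def by (rule integral_has_vector_derivative[OF _ that])
  moreover have "H0 a = 0" by (simp add: H0_def)
  ultimately show ?thesis
    using H1 \<open>a < b\<close>
    by (intro that[of "\<lambda>x. H0 x + c * (x - a)" "\<lambda>x. H1 x + c"])
      (auto simp: c_def intro!: derivative_eq_intros)
qed

lemma fundamental_lemma_of_variations:
  fixes h :: "real \<Rightarrow> real"
  assumes "a < b" "continuous_on {a..b} h"
    and orth: "\<And>\<eta>. C2 a b \<eta> \<Longrightarrow> \<eta> a = 0 \<Longrightarrow> \<eta> b = 0 \<Longrightarrow>
      integral {a..b} (\<lambda>s. \<eta> s * h s) = 0"
    and "x \<in> {a..b}"
  shows "h x = 0"
proof -
  obtain G G' where G: "G a = 0" "G b = 0"
    and dG: "\<And>x. x \<in> {a..b} \<Longrightarrow> (G has_vector_derivative G' x) (at x within {a..b})"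
    and dG': "\<And>x. x \<in> {a..b} \<Longrightarrow> (G' has_vector_derivative h x) (at x within {a..b})"
    using obtain_vanishing_second_antiderivative[OF assms(1,2)] by blast
  have cont: "continuous_on {a..b} G" "continuous_on {a..b} G'"
    using continuous_on_vector_derivative dG dG' by blast+
  have "integral {a..b} (\<lambda>s. G s * h s) = 0"
    using orth[OF C2I[OF \<open>a < b\<close> dG dG' assms(2)] G] .
  moreover have "(\<lambda>s. G s * h s) integrable_on {a..b}"
    by (intro integrable_continuous_real continuous_on_mult cont(1) assms(2))
  ultimately have Gh: "((\<lambda>s. G s * h s) has_integral 0) {a..b}"
    using integrable_integral by metis
  have "((\<lambda>s. G s * h s + G' s * G' s) has_integral 0) {a..b}"
    using fundamental_theorem_of_calculus[of a b "\<lambda>s. G s * G' s"] \<open>a < b\<close> G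
      has_vector_derivative_mult[OF dG dG'] by (simp add: algebra_simps)
  from has_integral_diff[OF this Gh]
  have "((\<lambda>s. G' s * G' s) has_integral 0) (cbox a b)" by simp
  then have G'_0: "G' s = 0" if "s \<in> {a..b}" for s
    using has_integral_0_cbox_imp_0[of a b "\<lambda>s. G' s * G' s" s] that \<open>a < b\<close>
    by (auto intro: continuous_on_mult cont(2))
  have "((\<lambda>_. 0) has_vector_derivative h x) (at x within {a..b})"
    by (rule has_vector_derivative_transform[OF \<open>x \<in> {a..b}\<close> _ dG'[OF \<open>x \<in> {a..b}\<close>]])
      (simp add: G'_0)
  then show ?thesis
    using dI_eqI[OF \<open>a < b\<close> \<open>x \<in> {a..b}\<close>] has_vector_derivative_const by metis
qed

theorem proposition2:
  fixes t1 t2 m k u1 v1 :: real and f u :: "real \<Rightarrow> real"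
  assumes "0 \<le> t1" "t1 < t2" "m > 0" "k > 0"
    and "continuous_on {t1..t2} f"
    and "C2 t1 t2 u" "u t1 = u1"
    and stat: "\<And>\<eta>. C2 t1 t2 \<eta> \<Longrightarrow> \<eta> t1 = 0 \<Longrightarrow>
        ((\<lambda>\<epsilon>. It t1 t2 m k f v1 (\<lambda>s. u s + \<epsilon> * \<eta> s)) has_real_derivative 0) (at 0)"
  shows "(\<forall>s\<in>{t1<..<t2}. m * dI t1 t2 (dI t1 t2 u) s + k * u s = f s)
         \<and> u t1 = u1 \<and> dI t1 t2 u t1 = v1"
proof -
  define E where "E s = m * dI t1 t2 (dI t1 t2 u) s + k * u s - f s" for s
  have weak: "m * (dI t1 t2 u t1 - v1) * \<eta> t2 + conv t1 t2 \<eta> E = 0"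
    if "C2 t1 t2 \<eta>" "\<eta> t1 = 0" for \<eta>
    using stationary_weak_euler_lagrange[OF \<open>t1 < t2\<close> \<open>C2 t1 t2 u\<close> that assms(5) stat[OF that]]
    unfolding E_def[abs_def] .
  have "continuous_on {t1..t2} E"
    unfolding E_def using C2_continuous[OF \<open>C2 t1 t2 u\<close>] assms(5) by (intro continuous_intros)
  then have E_0: "E s = 0" if "s \<in> {t1..t2}" for s
    using fundamental_lemma_of_variations[of t1 t2 "\<lambda>s. E (t1 + t2 - s)" "t1 + t2 - s"]
      weak that \<open>t1 < t2\<close> by (force simp: continuous_on_reflect conv_def)
  have "C2 t1 t2 (\<lambda>s. s - t1)"
    by (rule C2I[where g' = "\<lambda>_. 1" and g'' = "\<lambda>_. 0", OF \<open>t1 < t2\<close>])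
      (auto intro!: derivative_eq_intros)
  moreover have "conv t1 t2 (\<lambda>s. s - t1) E = 0"
    using conv_cong[of t1 t2 _ _ E "\<lambda>_. 0"] E_0 by (simp add: conv_def)
  ultimately have "m * (dI t1 t2 u t1 - v1) * (t2 - t1) = 0"
    using weak by fastforce
  then have "dI t1 t2 u t1 = v1"
    using \<open>t1 < t2\<close> \<open>m > 0\<close> by simp
  with E_0 \<open>u t1 = u1\<close> show ?thesis by (simp add: E_def)
qed

end
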